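(* If $\sigma^2<\infty$, then as $m\to\infty$, \[\mathbf{P}(N(m)\ge1)\sim c_\mu\mathbf{E}[\xi^*-1]\mu^m=c_\mu\left(\frac{\sigma^2+\mu^2}{\mu}-1\right)\mu^m.\]
   Context: $\xi$ is a random variable on $\{0,1,2,\dots\}$ with $\mathbf{P}(\xi=k)=p_k$, mean $\mu\in(0,1)$ and variance $\sigma^2>0$; $\xi^*$ has the size-biased law $\mathbf{P}(\xi^*=k)=kp_k/\mu$, $k\ge1$. For a rooted tree $T$, $\mathcal{H}(T)$ is its height. $c_\mu>0$ is the constant such that, for a Galton–Watson process $(Z_n)$ with offspring law $\xi$ and $Z_0=1$, $\mathbf{P}(Z_n>0)\sim c_\mu\mu^n$. Let $(\mathcal{T}_j)_{j\ge1}$ be independent Galton–Watson trees with offspring law $\xi$, independent of $\xi^*$, and $N(m)=\sum_{j=1}^{\xi^*-1}\mathbf{1}_{\{\mathcal{H}(\mathcal{T}_j)\ge m\}}$. *)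

theory Defs
  imports "HOL-Probability.Probability" "HOL-Library.Landau_Symbols"
begin

fun iid_sum :: "nat \<Rightarrow> nat pmf \<Rightarrow> nat pmf" where
  "iid_sum 0 X = return_pmf 0"
| "iid_sum (Suc n) X = bind_pmf X (\<lambda>a. bind_pmf (iid_sum n X) (\<lambda>b. return_pmf (a + b)))"

text \<open>Law of Z_n, the n-th generation size of a Galton--Watson process with offspring law p, Z_0 = 1.\<close>
fun gw_gen :: "nat pmf \<Rightarrow> nat \<Rightarrow> nat pmf" where
  "gw_gen p 0 = return_pmf 1"
| "gw_gen p (Suc n) = bind_pmf (gw_gen p n) (\<lambda>z. iid_sum z p)"

definition offspring_mean :: "nat pmf \<Rightarrow> real" where
  "offspring_mean p = measure_pmf.expectation p real"

definition offspring_var :: "nat pmf \<Rightarrow> real" where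
  "offspring_var p = measure_pmf.variance p real"

definition size_biased :: "nat pmf \<Rightarrow> nat pmf" where
  "size_biased p = embed_pmf (\<lambda>k. real k * pmf p k / offspring_mean p)"

text \<open>Law of the indicator 1{H(T) >= m} for a Galton--Watson tree T with offspring law p:
  the height is at least m iff generation m is nonempty.\<close>
definition height_ge_ind :: "nat pmf \<Rightarrow> nat \<Rightarrow> nat pmf" where
  "height_ge_ind p m = map_pmf (\<lambda>z. if z > 0 then 1 else 0) (gw_gen p m)"

text \<open>Law of N(m) = sum_{j=1}^{xi*-1} 1{H(T_j) >= m}, with T_j i.i.d. GW trees independent of xi*.\<close>
definition N_law :: "nat pmf \<Rightarrow> nat \<Rightarrow> nat pmf" where
  "N_law p m = bind_pmf (size_biased p) (\<lambda>k. iid_sum (k - 1) (height_ge_ind p m))"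

end

theory Submission
  imports Defs
begin

text \<open>Given \<open>\<xi>\<^sup>* = k\<close>, each of the \<open>k - 1\<close> independent trees reaches height \<open>m\<close> with
  probability \<open>q\<^sub>m = P(Z\<^sub>m > 0)\<close>, so \<open>P(N(m) \<ge> 1) = E[1 - (1 - q\<^sub>m)\<^bsup>\<xi>\<^sup>* - 1\<^esup>]\<close>, which
  factors as \<open>q\<^sub>m\<close> times the expectation of a geometric sum of \<open>\<xi>\<^sup>* - 1\<close> terms. As \<open>q\<^sub>m \<rightarrow> 0\<close> these
  sums tend to \<open>\<xi>\<^sup>* - 1\<close>, which is integrable because \<open>\<xi>\<close> has a second moment; dominated
  convergence gives the limit \<open>E[\<xi>\<^sup>* - 1] = E[\<xi>\<^sup>2]/\<mu> - 1\<close>, and \<open>q\<^sub>m \<sim> c\<^sub>\<mu> \<mu>\<^sup>m\<close> finishes.\<close>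

lemma iid_sum_Suc_eq_map_pair:
  "iid_sum (Suc n) X = map_pmf (\<lambda>(a, b). a + b) (pair_pmf X (iid_sum n X))"
  by (simp add: pair_pmf_def map_pmf_def bind_assoc_pmf bind_return_pmf)

lemma pmf_iid_sum_0: "pmf (iid_sum n X) 0 = pmf X 0 ^ n"
proof (induction n)
  case 0
  then show ?case by simp
next
  case (Suc n)
  have zero_preimage: "(\<lambda>(a, b). a + b) -` {0::nat} = {(0, 0)}" by auto
  show ?case
    unfolding iid_sum_Suc_eq_map_pair pmf_map zero_preimage measure_pmf_single pmf_pair Suc by simp
qed

lemma prob_atLeast_1_nat: "measure_pmf.prob (M :: nat pmf) {1..} = 1 - pmf M 0"
proof -
  have "{1..} = UNIV - {0::nat}" by auto
  then show ?thesis
    using measure_pmf.prob_compl[of "{0}" M] by (simp add: measure_pmf_single)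
qed

lemma pmf_height_ge_ind_0:
  "pmf (height_ge_ind p m) 0 = 1 - measure_pmf.prob (gw_gen p m) {0<..}"
proof -
  have "(\<lambda>z::nat. if z > 0 then 1 else 0::nat) -` {0} = UNIV - {0<..}" by auto
  then show ?thesis
    unfolding height_ge_ind_def pmf_map
    using measure_pmf.prob_compl[of "{0<..}" "gw_gen p m"] by simp
qed

lemma geometric_sum_bounds:
  fixes x :: real
  assumes "0 \<le> x" "x \<le> 1"
  shows "0 \<le> (\<Sum>i<n. (1 - x) ^ i)" "(\<Sum>i<n. (1 - x) ^ i) \<le> real n"
proof -
  show "0 \<le> (\<Sum>i<n. (1 - x) ^ i)" using assms by (auto intro!: sum_nonneg)
  have "(\<Sum>i<n. (1 - x) ^ i) \<le> (\<Sum>i<n. 1)"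
    using assms by (intro sum_mono power_le_one) auto
  then show "(\<Sum>i<n. (1 - x) ^ i) \<le> real n" by simp
qed

lemma prob_N_law_atLeast_1:
  fixes p :: "nat pmf" and m :: nat
  defines "q \<equiv> measure_pmf.prob (gw_gen p m) {0<..}"
  shows "measure_pmf.prob (N_law p m) {1..}
           = q * measure_pmf.expectation (size_biased p) (\<lambda>k. \<Sum>i<k - 1. (1 - q) ^ i)"
proof -
  have q01: "0 \<le> q" "q \<le> 1" by (auto simp: q_def)
  have "integrable (size_biased p) (\<lambda>k. (1 - q) ^ (k - 1))"
    using q01 by (intro measure_pmf.integrable_const_bound[where B = 1]) (auto simp: power_le_one)
  then have "measure_pmf.prob (N_law p m) {1..}
               = measure_pmf.expectation (size_biased p) (\<lambda>k. 1 - (1 - q) ^ (k - 1))"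
    unfolding N_law_def prob_atLeast_1_nat pmf_bind pmf_iid_sum_0 pmf_height_ge_ind_0 q_def
    by (subst Bochner_Integration.integral_diff) auto
  also have "\<dots> = measure_pmf.expectation (size_biased p) (\<lambda>k. q * (\<Sum>i<k - 1. (1 - q) ^ i))"
    using one_diff_power_eq[of "1 - q"] by simp
  finally show ?thesis by simp
qed

lemma measure_pmf_size_biased:
  assumes "integrable (measure_pmf p) real" "0 < offspring_mean p"
  shows "measure_pmf (size_biased p) = density (measure_pmf p) (\<lambda>k. ennreal (real k / offspring_mean p))"
proof -
  define \<mu> where "\<mu> = offspring_mean p"
  define w where "w k = real k * pmf p k / \<mu>" for k
  have \<mu>: "0 < \<mu>" using assms(2) by (simp add: \<mu>_def)
  have w_eq: "ennreal (w k) = ennreal (pmf p k) * ennreal (real k / \<mu>)" for k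
    using \<mu> by (simp add: w_def ennreal_mult [symmetric])
  have "(\<integral>\<^sup>+k. ennreal (w k) \<partial>count_space UNIV) = (\<integral>\<^sup>+k. ennreal (real k / \<mu>) \<partial>measure_pmf p)"
    by (simp add: w_eq nn_integral_measure_pmf)
  also have "\<dots> = ennreal (\<integral>k. real k / \<mu> \<partial>measure_pmf p)"
    using \<mu> assms(1) by (intro nn_integral_eq_integral) auto
  also have "\<dots> = 1"
    using \<mu> by (simp add: \<mu>_def offspring_mean_def)
  finally have "measure_pmf (size_biased p) = density (count_space UNIV) (ennreal \<circ> w)"
    using embed_pmf.rep_eq[of w] \<mu> by (simp add: size_biased_def w_def [abs_def] \<mu>_def [symmetric])
  also have "\<dots> = density (density (count_space UNIV) (pmf p)) (\<lambda>k. ennreal (real k / \<mu>))"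
    by (subst density_density_eq) (auto simp: comp_def w_eq)
  finally show ?thesis by (simp add: measure_pmf_eq_density [symmetric] \<mu>_def)
qed

lemma
  fixes g :: "nat \<Rightarrow> real"
  assumes "integrable (measure_pmf p) real" "0 < offspring_mean p"
  shows integral_size_biased:
      "measure_pmf.expectation (size_biased p) g = (\<integral>k. real k / offspring_mean p * g k \<partial>measure_pmf p)"
    and integrable_size_biased_iff:
      "integrable (size_biased p) g \<longleftrightarrow> integrable (measure_pmf p) (\<lambda>k. real k / offspring_mean p * g k)"
  using assms by (simp_all add: measure_pmf_size_biased integral_density integrable_density)

lemma size_biased_pred_real_diff:
  assumes "integrable (measure_pmf p) real" "0 < offspring_mean p"
  shows "measure_pmf.expectation (size_biased p) (\<lambda>k. real k - 1)
           = measure_pmf.expectation (size_biased p) (\<lambda>k. real (k - 1))"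
  unfolding integral_size_biased[OF assms]
  by (rule Bochner_Integration.integral_cong) (auto simp: of_nat_diff)

lemma integrable_size_biased_pred:
  assumes "integrable (measure_pmf p) real" "integrable (measure_pmf p) (\<lambda>k. (real k)^2)"
    and "0 < offspring_mean p"
  shows "integrable (size_biased p) (\<lambda>k. real (k - 1))"
proof -
  have "real k * real (k - 1) = (real k)^2 - real k" for k
    by (cases k) (auto simp: power2_eq_square algebra_simps)
  moreover have "integrable (measure_pmf p) (\<lambda>k. ((real k)^2 - real k) / offspring_mean p)"
    using assms(1,2) by auto
  ultimately show ?thesis
    using assms by (simp add: integrable_size_biased_iff)
qed

lemma expectation_size_biased_pred:
  assumes int1: "integrable (measure_pmf p) real" and int2: "integrable (measure_pmf p) (\<lambda>k. (real k)^2)"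
    and "0 < offspring_mean p"
  shows "measure_pmf.expectation (size_biased p) (\<lambda>k. real k - 1)
           = (offspring_var p + (offspring_mean p)^2) / offspring_mean p - 1"
proof -
  define \<mu> where "\<mu> = offspring_mean p"
  have \<mu>: "0 < \<mu>" "measure_pmf.expectation p real = \<mu>"
    using assms(3) by (simp_all add: \<mu>_def offspring_mean_def)
  have "measure_pmf.expectation (size_biased p) (\<lambda>k. real k - 1)
          = (\<integral>k. ((real k)^2 - real k) \<partial>measure_pmf p) / \<mu>"
  proof -
    have "(\<lambda>k. real k / \<mu> * (real k - 1)) = (\<lambda>k. ((real k)^2 - real k) / \<mu>)"
      by (auto simp: field_simps power2_eq_square)
    then show ?thesis
      unfolding integral_size_biased[OF int1 assms(3)] \<mu>_def[symmetric] by simp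
  qed
  also have "\<dots> = (measure_pmf.expectation p (\<lambda>k. (real k)^2) - \<mu>) / \<mu>"
    using int1 int2 \<mu> by (subst Bochner_Integration.integral_diff) auto
  also have "offspring_var p = measure_pmf.expectation p (\<lambda>k. (real k)^2) - \<mu>^2"
    unfolding offspring_var_def using measure_pmf.variance_eq[OF int1 int2] \<mu> by simp
  then have "(measure_pmf.expectation p (\<lambda>k. (real k)^2) - \<mu>) / \<mu> = (offspring_var p + \<mu>^2) / \<mu> - 1"
    using \<mu> by (simp add: field_simps)
  finally show ?thesis by (simp add: \<mu>_def)
qed

lemma expectation_geometric_sum_tendsto:
  fixes M :: "nat pmf" and q :: "nat \<Rightarrow> real"
  assumes "integrable M (\<lambda>k. real (k - 1))"
    and "q \<longlonglongrightarrow> 0" "\<And>m. 0 \<le> q m" "\<And>m. q m \<le> 1"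
  shows "(\<lambda>m. measure_pmf.expectation M (\<lambda>k. \<Sum>i<k - 1. (1 - q m) ^ i))
           \<longlonglongrightarrow> measure_pmf.expectation M (\<lambda>k. real (k - 1))"
proof (rule integral_dominated_convergence[where w = "\<lambda>k. real (k - 1)"])
  show "AE k in M. (\<lambda>m. \<Sum>i<k - 1. (1 - q m) ^ i) \<longlonglongrightarrow> real (k - 1)"
  proof (rule AE_I2)
    fix k :: nat
    have "(\<lambda>m. \<Sum>i<k - 1. (1 - q m) ^ i) \<longlonglongrightarrow> (\<Sum>i<k - 1. (1 - 0) ^ i)"
      by (intro tendsto_intros assms(2))
    then show "(\<lambda>m. \<Sum>i<k - 1. (1 - q m) ^ i) \<longlonglongrightarrow> real (k - 1)" by simp
  qed
  show "AE k in M. norm (\<Sum>i<k - 1. (1 - q m) ^ i) \<le> real (k - 1)" for m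
    using geometric_sum_bounds[OF assms(3,4)] by auto
qed (use assms(1) in auto)

lemma expectation_geometric_sum_bounds:
  fixes M :: "nat pmf" and x :: real
  assumes "integrable M (\<lambda>k. real (k - 1))" "0 \<le> x" "x \<le> 1"
  shows "\<bar>measure_pmf.expectation M (\<lambda>k. \<Sum>i<k - 1. (1 - x) ^ i)\<bar>
           \<le> \<bar>measure_pmf.expectation M (\<lambda>k. real (k - 1))\<bar>"
proof -
  note bounds = geometric_sum_bounds[OF assms(2,3)]
  have "integrable M (\<lambda>k. \<Sum>i<k - 1. (1 - x) ^ i)"
    by (rule Bochner_Integration.integrable_bound[OF assms(1)]) (use bounds in auto)
  then have "measure_pmf.expectation M (\<lambda>k. \<Sum>i<k - 1. (1 - x) ^ i)
               \<le> measure_pmf.expectation M (\<lambda>k. real (k - 1))"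
    using assms(1) bounds by (intro integral_mono) auto
  moreover have "0 \<le> measure_pmf.expectation M (\<lambda>k. \<Sum>i<k - 1. (1 - x) ^ i)"
    using bounds by (auto intro!: Bochner_Integration.integral_nonneg)
  ultimately show ?thesis by simp
qed

text \<open>The bound on \<open>A\<close> covers the degenerate case \<open>E = 0\<close>, where convergence alone does
  not give asymptotic equivalence.\<close>
lemma asymp_equiv_mult_tendsto:
  fixes f g A :: "'a \<Rightarrow> real"
  assumes "f \<sim>[F] g" "(A \<longlongrightarrow> E) F" "\<forall>\<^sub>F x in F. \<bar>A x\<bar> \<le> \<bar>E\<bar>"
  shows "(\<lambda>x. f x * A x) \<sim>[F] (\<lambda>x. g x * E)"
proof (cases "E = 0")
  case True
  with assms(3) have "\<forall>\<^sub>F x in F. f x * A x = g x * E" by (auto elim: eventually_mono)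
  then show ?thesis by (rule asymp_equiv_refl_ev)
next
  case False
  show ?thesis
    using asymp_equiv_mult[OF assms(1) tendsto_imp_asymp_equiv_const[OF assms(2) False]] .
qed

theorem corollary3p2:
  fixes p :: "nat pmf" and c :: real
  assumes int1: "integrable (measure_pmf p) real"
    and int2: "integrable (measure_pmf p) (\<lambda>k. (real k)^2)"
    and mu_pos: "0 < offspring_mean p" and mu_lt1: "offspring_mean p < 1"
    and var_pos: "0 < offspring_var p"
    and c_pos: "0 < c"
    and c_def: "(\<lambda>n. measure_pmf.prob (gw_gen p n) {0<..}) \<sim>[at_top] (\<lambda>n. c * offspring_mean p ^ n)"
  shows "(\<lambda>m. measure_pmf.prob (N_law p m) {1..})
           \<sim>[at_top] (\<lambda>m. c * measure_pmf.expectation (size_biased p) (\<lambda>k. real k - 1) * offspring_mean p ^ m)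
       \<and> measure_pmf.expectation (size_biased p) (\<lambda>k. real k - 1)
           = (offspring_var p + (offspring_mean p)^2) / offspring_mean p - 1"
proof
  define q where "q m = measure_pmf.prob (gw_gen p m) {0<..}" for m
  define E where "E = measure_pmf.expectation (size_biased p) (\<lambda>k. real (k - 1))"
  define A where "A m = measure_pmf.expectation (size_biased p) (\<lambda>k. \<Sum>i<k - 1. (1 - q m) ^ i)" for m
  have q01: "0 \<le> q m" "q m \<le> 1" for m by (auto simp: q_def)
  have "(\<lambda>n. c * offspring_mean p ^ n) \<longlonglongrightarrow> c * 0"
    using mu_pos mu_lt1 by (intro tendsto_intros LIMSEQ_power_zero) auto
  then have "q \<longlonglongrightarrow> 0"
    using asymp_equiv_tendsto_transfer[OF asymp_equiv_symI[OF c_def]] by (simp add: q_def [abs_def])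
  note intk = integrable_size_biased_pred[OF int1 int2 mu_pos]
  have "(\<lambda>m. q m * A m) \<sim>[at_top] (\<lambda>m. c * offspring_mean p ^ m * E)"
    unfolding A_def E_def
    using c_def[folded q_def] expectation_geometric_sum_tendsto[OF intk \<open>q \<longlonglongrightarrow> 0\<close> q01]
      expectation_geometric_sum_bounds[OF intk q01]
    by (intro asymp_equiv_mult_tendsto) auto
  then show "(\<lambda>m. measure_pmf.prob (N_law p m) {1..})
      \<sim>[at_top] (\<lambda>m. c * measure_pmf.expectation (size_biased p) (\<lambda>k. real k - 1) * offspring_mean p ^ m)"
    unfolding prob_N_law_atLeast_1 size_biased_pred_real_diff[OF int1 mu_pos]
    by (simp add: q_def A_def E_def ac_simps)
  show "measure_pmf.expectation (size_biased p) (\<lambda>k. real k - 1)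
      = (offspring_var p + (offspring_mean p)^2) / offspring_mean p - 1"
    by (rule expectation_size_biased_pred[OF int1 int2 mu_pos])
qed

end
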